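(* Let $p_1\in \mathbb{P}^2$ and let $p_2$ be a point which is either in the first neighbourhood of $p_1$ or a distinct point of $\mathbb{P}^2$. Then there exist a morphism $\nu\colon\mathbb{A}^1\to \mathrm{Bir}(\mathbb{P}^2)$ and a morphism $p_3\colon \mathbb{A}^1\to \mathbb{P}^2$ such that: $(1)$ for $t\not=0$, $\nu(t)$ is a quadratic map with base-points $p_1,p_2,p_3(t)$; $(2)$ the map $\nu(0)$ is the identity and $p_3(0)$ is collinear with $p_1$ and $p_2$.
   Context: Work over an algebraically closed field of characteristic $0$. $\mathrm{Bir}(\mathbb{P}^2)$ is the group of birational transformations of $\mathbb{P}^2$. A morphism $A\to\mathrm{Bir}(\mathbb{P}^2)$ from an irreducible variety $A$ is a family in the sense of Demazure: an $A$-birational map $f$ of $A\times\mathbb{P}^2$, $(a,x)\dashrightarrow(a,p_2(f(a,x)))$, inducing an isomorphism between open subsets surjecting onto $A$, with $a\mapsto f_a$. A quadratic map is a birational map of degree $2$. *)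

theory Defs
  imports "HOL-Computational_Algebra.Polynomial"
begin

type_synonym 'k pt = "'k \<times> 'k \<times> 'k"

definition c0 :: "'k pt \<Rightarrow> 'k" where "c0 v = fst v"
definition c1 :: "'k pt \<Rightarrow> 'k" where "c1 v = fst (snd v)"
definition c2 :: "'k pt \<Rightarrow> 'k" where "c2 v = snd (snd v)"

definition nz :: "'k::zero pt \<Rightarrow> bool" where "nz v \<longleftrightarrow> v \<noteq> (0,0,0)"

definition smult3 :: "'k::times \<Rightarrow> 'k pt \<Rightarrow> 'k pt" where
  "smult3 c v = (c * c0 v, c * c1 v, c * c2 v)"

definition add3 :: "'k::plus pt \<Rightarrow> 'k pt \<Rightarrow> 'k pt" where
  "add3 v w = (c0 v + c0 w, c1 v + c1 w, c2 v + c2 w)"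

definition proj_eq :: "'k::field pt \<Rightarrow> 'k pt \<Rightarrow> bool" where
  "proj_eq v w \<longleftrightarrow> nz v \<and> (\<exists>c. c \<noteq> 0 \<and> w = smult3 c v)"

definition par3 :: "'k::comm_ring pt \<Rightarrow> 'k pt \<Rightarrow> bool" where
  "par3 a b \<longleftrightarrow> c0 a * c1 b = c1 a * c0 b \<and> c0 a * c2 b = c2 a * c0 b \<and> c1 a * c2 b = c2 a * c1 b"

definition det3 :: "'k::comm_ring pt \<Rightarrow> 'k pt \<Rightarrow> 'k pt \<Rightarrow> 'k" where
  "det3 a b c = c0 a * (c1 b * c2 c - c2 b * c1 c) - c1 a * (c0 b * c2 c - c2 b * c0 c)
              + c2 a * (c0 b * c1 c - c1 b * c0 c)"

definition alg_closed :: "'k::field itself \<Rightarrow> bool" where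
  "alg_closed _ \<longleftrightarrow> (\<forall>p :: 'k poly. degree p > 0 \<longrightarrow> (\<exists>x. poly p x = 0))"

definition hompoly :: "nat \<Rightarrow> ('k::comm_ring_1 pt \<Rightarrow> 'k) \<Rightarrow> bool" where
  "hompoly d P \<longleftrightarrow> (\<exists>C :: nat \<Rightarrow> nat \<Rightarrow> 'k. \<forall>x y z.
      P (x,y,z) = (\<Sum>i\<le>d. \<Sum>j\<le>d-i. C i j * x^i * y^j * z^(d-i-j)))"

definition hommap :: "nat \<Rightarrow> ('k::comm_ring_1 pt \<Rightarrow> 'k pt) \<Rightarrow> bool" where
  "hommap d H \<longleftrightarrow> hompoly d (\<lambda>v. c0 (H v)) \<and> hompoly d (\<lambda>v. c1 (H v)) \<and> hompoly d (\<lambda>v. c2 (H v))"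

definition fampoly :: "nat \<Rightarrow> ('k::comm_ring_1 \<Rightarrow> 'k pt \<Rightarrow> 'k) \<Rightarrow> bool" where
  "fampoly d P \<longleftrightarrow> (\<exists>(N::nat) (C :: nat \<Rightarrow> nat \<Rightarrow> nat \<Rightarrow> 'k). \<forall>t x y z.
      P t (x,y,z) = (\<Sum>a\<le>N. \<Sum>i\<le>d. \<Sum>j\<le>d-i. C a i j * t^a * x^i * y^j * z^(d-i-j)))"

definition fammap :: "nat \<Rightarrow> ('k::comm_ring_1 \<Rightarrow> 'k pt \<Rightarrow> 'k pt) \<Rightarrow> bool" where
  "fammap d F \<longleftrightarrow> fampoly d (\<lambda>t v. c0 (F t v)) \<and> fampoly d (\<lambda>t v. c1 (F t v))
                  \<and> fampoly d (\<lambda>t v. c2 (F t v))"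

text \<open>Zariski open subsets of P^2 (as saturated sets of nonzero representatives).\<close>
definition zopen2 :: "'k::comm_ring_1 pt set \<Rightarrow> bool" where
  "zopen2 W \<longleftrightarrow> (\<exists>S. (\<forall>P\<in>S. \<exists>d. hompoly d P) \<and> W = {x. nz x \<and> (\<exists>P\<in>S. P x \<noteq> 0)})"

definition zopen_fam :: "('k::comm_ring_1 \<times> 'k pt) set \<Rightarrow> bool" where
  "zopen_fam U \<longleftrightarrow> (\<exists>S. (\<forall>P\<in>S. \<exists>d. fampoly d P)
       \<and> U = {(t,x). nz x \<and> (\<exists>P\<in>S. P t x \<noteq> 0)})"

text \<open>Two representatives define the same rational map.\<close>
definition fam_equiv :: "('k::comm_ring_1 \<Rightarrow> 'k pt \<Rightarrow> 'k pt) \<Rightarrow> ('k \<Rightarrow> 'k pt \<Rightarrow> 'k pt) \<Rightarrow> bool" where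
  "fam_equiv F G \<longleftrightarrow> (\<forall>t v. par3 (F t v) (G t v))"

definition fam_nontriv :: "('k::zero \<Rightarrow> 'k pt \<Rightarrow> 'k pt) \<Rightarrow> bool" where
  "fam_nontriv F \<longleftrightarrow> (\<exists>t v. nz (F t v))"

text \<open>The rational map (t,x) |-> (t, F(t,x)) is defined at (t,x) with value w.\<close>
definition rat_val :: "('k::field \<Rightarrow> 'k pt \<Rightarrow> 'k pt) \<Rightarrow> 'k \<Rightarrow> 'k pt \<Rightarrow> 'k pt \<Rightarrow> bool" where
  "rat_val F t x w \<longleftrightarrow> nz x \<and> (\<exists>d F'. fammap d F' \<and> fam_nontriv F' \<and> fam_equiv F F'
        \<and> proj_eq (F' t x) w)"

text \<open>Morphism A^1 -> Bir(P^2) in the sense of Demazure, given by an A^1-birational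
  map f of A^1 x P^2 (represented by F, with inverse G) inducing an isomorphism
  between open subsets U, V that both surject onto A^1.\<close>
definition demazure_family :: "('k::field \<Rightarrow> 'k pt \<Rightarrow> 'k pt) \<Rightarrow> bool" where
  "demazure_family F \<longleftrightarrow> (\<exists>d e G U V. fammap d F \<and> fam_nontriv F \<and> fammap e G \<and> fam_nontriv G
     \<and> zopen_fam U \<and> zopen_fam V \<and> fst ` U = UNIV \<and> fst ` V = UNIV
     \<and> (\<forall>t x. (t,x) \<in> U \<longrightarrow> (\<exists>w. rat_val F t x w \<and> (t,w) \<in> V \<and> rat_val G t w x))
     \<and> (\<forall>t w. (t,w) \<in> V \<longrightarrow> (\<exists>x. rat_val G t w x \<and> (t,x) \<in> U \<and> rat_val F t x w)))"

text \<open>H (a triple of homogeneous polynomials) represents the birational map f_t of P^2,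
  i.e. agrees with the fibre of f over t on a nonempty Zariski open set.\<close>
definition fiber_rep :: "('k::field \<Rightarrow> 'k pt \<Rightarrow> 'k pt) \<Rightarrow> 'k \<Rightarrow> ('k pt \<Rightarrow> 'k pt) \<Rightarrow> bool" where
  "fiber_rep F t H \<longleftrightarrow> (\<exists>m W. hommap m H \<and> (\<exists>v. nz (H v)) \<and> zopen2 W \<and> W \<noteq> {}
      \<and> (\<forall>x\<in>W. nz (H x) \<and> rat_val F t x (H x)))"

text \<open>Second point: either a proper point of P^2 or a point in the first neighbourhood
  of p1, i.e. a tangent direction at p1, given by a vector v (the line through p1 and [v]).\<close>
datatype 'k second_pt = Proper "'k pt" | Infnear "'k pt"

definition valid_second :: "'k::field pt \<Rightarrow> 'k second_pt \<Rightarrow> bool" where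
  "valid_second p1 q = (case q of Proper w \<Rightarrow> nz w \<and> \<not> par3 p1 w
                                | Infnear v \<Rightarrow> nz v \<and> \<not> par3 p1 v)"

definition second_vec :: "'k second_pt \<Rightarrow> 'k pt" where
  "second_vec q = (case q of Proper w \<Rightarrow> w | Infnear v \<Rightarrow> v)"

definition second_cond :: "'k::comm_ring_1 pt \<Rightarrow> 'k second_pt \<Rightarrow> ('k pt \<Rightarrow> 'k) \<Rightarrow> bool" where
  "second_cond p1 q Q = (case q of Proper w \<Rightarrow> Q w = 0
                                 | Infnear v \<Rightarrow> Q (add3 p1 v) - Q p1 - Q v = 0)"

definition birational_map :: "('k::field pt \<Rightarrow> 'k pt) \<Rightarrow> bool" where
  "birational_map H \<longleftrightarrow> (\<exists>m e K W W'. hommap m H \<and> hommap e K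
      \<and> zopen2 W \<and> W \<noteq> {} \<and> (\<forall>x\<in>W. nz (H x) \<and> nz (K (H x)) \<and> proj_eq x (K (H x)))
      \<and> zopen2 W' \<and> W' \<noteq> {} \<and> (\<forall>x\<in>W'. nz (K x) \<and> nz (H (K x)) \<and> proj_eq x (H (K x))))"

definition no_common_factor :: "nat \<Rightarrow> ('k::comm_ring_1 pt \<Rightarrow> 'k pt) \<Rightarrow> bool" where
  "no_common_factor d H \<longleftrightarrow> \<not> (\<exists>c L M. 0 < c \<and> c \<le> d \<and> hompoly c L \<and> (\<exists>v. L v \<noteq> 0)
       \<and> hommap (d - c) M \<and> (\<forall>v. H v = smult3 (L v) (M v)))"

text \<open>H is a quadratic map (birational of degree 2) whose base points are p1, p2, p3:
  its homaloidal net equals the net of conics through p1, p2, p3.\<close>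
definition quad_map_bp :: "('k::field pt \<Rightarrow> 'k pt) \<Rightarrow> 'k pt \<Rightarrow> 'k second_pt \<Rightarrow> 'k pt \<Rightarrow> bool" where
  "quad_map_bp H p1 p2 p3 \<longleftrightarrow> hommap 2 H \<and> no_common_factor 2 H \<and> birational_map H
     \<and> {(\<lambda>v. a * c0 (H v) + b * c1 (H v) + c * c2 (H v)) | a b c. True}
       = {Q. hompoly 2 Q \<and> Q p1 = 0 \<and> second_cond p1 p2 Q \<and> Q p3 = 0}"

definition morph_A1_P2 :: "('k::comm_ring_1 \<Rightarrow> 'k pt) \<Rightarrow> bool" where
  "morph_A1_P2 p \<longleftrightarrow> (\<exists>u0 u1 u2. \<forall>t. p t = (poly u0 t, poly u1 t, poly u2 t) \<and> nz (p t))"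

end

theory Submission
  imports Defs
begin

(* In coordinates with p1 = [1:0:0] and p2 = [0:1:0], respectively p2 the direction of the line
   z = 0 at p1, the quadratic maps
     (x(z - ty), y(z - tx), z^2 - t^2xy)   and   (xz, y(z - ty), z^2 - t^2y^2)
   have base points p1, p2 and [1:1:t], respectively [0:1:t], for t \<noteq> 0, and equal z \<cdot> id,
   i.e. the identity, at t = 0. Both have explicit quadratic inverses depending polynomially on t,
   so they form a Demazure family; the third base point at t = 0 lies on the line z = 0 through
   p1 and p2. A linear change of coordinates moves p1 and p2 to arbitrary position and carries
   base points, homaloidal nets and the absence of common factors along with it. *)

lemma c012_simps [simp]: "c0 (x,y,z) = x" "c1 (x,y,z) = y" "c2 (x,y,z) = z"
  by (simp_all add: c0_def c1_def c2_def)

lemma fampoly_altdef: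
  "fampoly d P \<longleftrightarrow> (\<exists>(N::nat) C. \<forall>t v. P t v =
     (\<Sum>a\<le>N. \<Sum>i\<le>d. \<Sum>j\<le>d-i. C a i j * t^a * c0 v^i * c1 v^j * c2 v^(d-i-j)))"
  unfolding fampoly_def c0_def c1_def c2_def by auto

lemma fampoly_cong: "fampoly d P \<Longrightarrow> (\<And>t v. P t v = Q t v) \<Longrightarrow> fampoly d Q"
  by (metis ext)

lemma fampoly_monomial:
  assumes "i + j + k = d"
  shows "fampoly d (\<lambda>t v. c * t^a * c0 v^i * c1 v^j * c2 v^k)"
  unfolding fampoly_altdef
proof (intro exI allI)
  fix t v
  have pull: "(\<Sum>x\<in>A. if P then f x else 0) = (if P then sum f A else 0)" for P A and f :: "nat \<Rightarrow> 'a"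
    by simp
  have "k = d - i - j" using assms by simp
  then show "c * t^a * c0 v^i * c1 v^j * c2 v^k = (\<Sum>a'\<le>a. \<Sum>i'\<le>d. \<Sum>j'\<le>d-i'.
      (if a' = a then if i' = i then if j' = j then c else 0 else 0 else 0)
        * t^a' * c0 v^i' * c1 v^j' * c2 v^(d-i'-j'))"
    using assms by (simp add: if_distrib[where f="\<lambda>x. x * _"] pull sum.delta cong: if_cong)
qed

lemma fampoly_zero: "fampoly d (\<lambda>t v. 0)"
  using fampoly_monomial[of 0 0 d d 0 0] by simp

lemma fampoly_const: "fampoly 0 (\<lambda>t v. c)"
  using fampoly_monomial[of 0 0 0 0 c 0] by simp

lemma fampoly_t: "fampoly 0 (\<lambda>t v. t)"
  using fampoly_monomial[of 0 0 0 0 1 1] by simp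

lemma fampoly_x: "fampoly 1 (\<lambda>t v. c0 v)"
  using fampoly_monomial[of 1 0 0 1 1 0] by simp

lemma fampoly_y: "fampoly 1 (\<lambda>t v. c1 v)"
  using fampoly_monomial[of 0 1 0 1 1 0] by simp

lemma fampoly_z: "fampoly 1 (\<lambda>t v. c2 v)"
  using fampoly_monomial[of 0 0 1 1 1 0] by simp

lemma fampoly_cmult:
  assumes "fampoly d P"
  shows "fampoly d (\<lambda>t v. c * P t v)"
proof -
  obtain N C where P: "\<And>t v. P t v =
     (\<Sum>a\<le>N. \<Sum>i\<le>d. \<Sum>j\<le>d-i. C a i j * t^a * c0 v^i * c1 v^j * c2 v^(d-i-j))"
    using assms unfolding fampoly_altdef by blast
  show ?thesis unfolding fampoly_altdef
    by (intro exI[of _ N] exI[of _ "\<lambda>a i j. c * C a i j"]) (simp add: P sum_distrib_left mult.assoc)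
qed

lemma fampoly_padded:
  assumes "fampoly d P"
  obtains N C where "\<And>M t v. N \<le> M \<Longrightarrow> P t v =
     (\<Sum>a\<le>M. \<Sum>i\<le>d. \<Sum>j\<le>d-i. C a i j * t^a * c0 v^i * c1 v^j * c2 v^(d-i-j))"
proof -
  from assms obtain N C where P: "\<And>t v. P t v =
     (\<Sum>a\<le>N. \<Sum>i\<le>d. \<Sum>j\<le>d-i. C a i j * t^a * c0 v^i * c1 v^j * c2 v^(d-i-j))"
    unfolding fampoly_altdef by blast
  define C' where "C' a i j = (if a \<le> N then C a i j else 0)" for a i j
  have padded: "P t v = (\<Sum>a\<le>M. \<Sum>i\<le>d. \<Sum>j\<le>d-i. C' a i j * t^a * c0 v^i * c1 v^j * c2 v^(d-i-j))"
    if "N \<le> M" for M t v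
  proof -
    have "(\<Sum>a\<le>M. \<Sum>i\<le>d. \<Sum>j\<le>d-i. C' a i j * t^a * c0 v^i * c1 v^j * c2 v^(d-i-j))
        = (\<Sum>a\<le>N. \<Sum>i\<le>d. \<Sum>j\<le>d-i. C' a i j * t^a * c0 v^i * c1 v^j * c2 v^(d-i-j))"
      by (rule sum.mono_neutral_right) (use that in \<open>auto simp: C'_def\<close>)
    then show ?thesis by (simp add: P C'_def)
  qed
  show thesis by (rule that[OF padded])
qed

lemma fampoly_add:
  assumes "fampoly d P" "fampoly d Q"
  shows "fampoly d (\<lambda>t v. P t v + Q t v)"
proof -
  obtain N1 C1 where P: "\<And>M t v. N1 \<le> M \<Longrightarrow> P t v =
     (\<Sum>a\<le>M. \<Sum>i\<le>d. \<Sum>j\<le>d-i. C1 a i j * t^a * c0 v^i * c1 v^j * c2 v^(d-i-j))"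
    using fampoly_padded[OF assms(1)] by blast
  obtain N2 C2 where Q: "\<And>M t v. N2 \<le> M \<Longrightarrow> Q t v =
     (\<Sum>a\<le>M. \<Sum>i\<le>d. \<Sum>j\<le>d-i. C2 a i j * t^a * c0 v^i * c1 v^j * c2 v^(d-i-j))"
    using fampoly_padded[OF assms(2)] by blast
  show ?thesis unfolding fampoly_altdef
    by (intro exI[of _ "N1 + N2"] exI[of _ "\<lambda>a i j. C1 a i j + C2 a i j"])
      (simp add: P[of "N1 + N2"] Q[of "N1 + N2"] distrib_right sum.distrib)
qed

lemma fampoly_sum:
  "finite A \<Longrightarrow> (\<And>k. k \<in> A \<Longrightarrow> fampoly d (f k)) \<Longrightarrow> fampoly d (\<lambda>t v. \<Sum>k\<in>A. f k t v)"
  by (induction A rule: finite_induct) (auto intro: fampoly_zero fampoly_add)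

lemma fampoly_monomial_mult:
  assumes "fampoly e Q" "i + j + k = d"
  shows "fampoly (d + e) (\<lambda>t v. (c * t^a * c0 v^i * c1 v^j * c2 v^k) * Q t v)"
proof -
  from assms(1) obtain N C where Q: "\<And>t v. Q t v =
     (\<Sum>b\<le>N. \<Sum>i\<le>e. \<Sum>j\<le>e-i. C b i j * t^b * c0 v^i * c1 v^j * c2 v^(e-i-j))"
    unfolding fampoly_altdef by blast
  have "fampoly (d + e) (\<lambda>t v. \<Sum>b\<le>N. \<Sum>i'\<le>e. \<Sum>j'\<le>e-i'.
      (c * C b i' j') * t^(a+b) * c0 v^(i+i') * c1 v^(j+j') * c2 v^(k + (e-i'-j')))"
    by (intro fampoly_sum finite_atMost fampoly_monomial) (use assms(2) in auto)
  then show ?thesis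
    by (rule fampoly_cong) (simp only: Q sum_distrib_left power_add mult_ac)
qed

lemma fampoly_mult: "fampoly d P \<Longrightarrow> fampoly e Q \<Longrightarrow> fampoly (d + e) (\<lambda>t v. P t v * Q t v)"
proof -
  assume "fampoly d P" "fampoly e Q"
  from \<open>fampoly d P\<close> obtain N C where P: "\<And>t v. P t v =
     (\<Sum>a\<le>N. \<Sum>i\<le>d. \<Sum>j\<le>d-i. C a i j * t^a * c0 v^i * c1 v^j * c2 v^(d-i-j))"
    unfolding fampoly_altdef by blast
  have "fampoly (d + e) (\<lambda>t v. \<Sum>a\<le>N. \<Sum>i\<le>d. \<Sum>j\<le>d-i.
      (C a i j * t^a * c0 v^i * c1 v^j * c2 v^(d-i-j)) * Q t v)"
    by (intro fampoly_sum finite_atMost fampoly_monomial_mult \<open>fampoly e Q\<close>) auto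
  then show ?thesis
    by (rule fampoly_cong) (simp add: P sum_distrib_right)
qed

lemma fampoly_mult': "fampoly d P \<Longrightarrow> fampoly e Q \<Longrightarrow> n = d + e \<Longrightarrow> fampoly n (\<lambda>t v. P t v * Q t v)"
  using fampoly_mult by blast

lemma fampoly_power: "fampoly d P \<Longrightarrow> m = n * d \<Longrightarrow> fampoly m (\<lambda>t v. P t v ^ n)"
proof (induction n arbitrary: m)
  case 0
  then show ?case using fampoly_const[of 1] by simp
next
  case (Suc n)
  then show ?case using fampoly_mult[of d P "n * d"] by simp
qed

lemma fampoly_uminus: "fampoly d P \<Longrightarrow> fampoly d (\<lambda>t v. - P t v)"
  using fampoly_cmult[of d P "-1"] by simp

lemma fampoly_diff: "fampoly d P \<Longrightarrow> fampoly d Q \<Longrightarrow> fampoly d (\<lambda>t v. P t v - Q t v)"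
  using fampoly_add[of d P "\<lambda>t v. - Q t v"] fampoly_uminus[of d Q] by simp

lemmas fampoly_intros = fampoly_add fampoly_diff fampoly_uminus fampoly_cmult fampoly_mult'
  fampoly_power fampoly_const fampoly_t fampoly_x fampoly_y fampoly_z

lemma fampoly_subst:
  assumes "fampoly d P" "fampoly 1 L0" "fampoly 1 L1" "fampoly 1 L2"
  shows "fampoly d (\<lambda>t v. P t (L0 t v, L1 t v, L2 t v))"
proof -
  from assms(1) obtain N C where P: "\<And>t v. P t v =
     (\<Sum>a\<le>N. \<Sum>i\<le>d. \<Sum>j\<le>d-i. C a i j * t^a * c0 v^i * c1 v^j * c2 v^(d-i-j))"
    unfolding fampoly_altdef by blast
  have "fampoly d (\<lambda>t v. \<Sum>a\<le>N. \<Sum>i\<le>d. \<Sum>j\<le>d-i.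
      C a i j * t^a * L0 t v^i * L1 t v^j * L2 t v^(d-i-j))"
    by (intro fampoly_sum finite_atMost) (rule fampoly_mult' fampoly_power fampoly_const fampoly_t assms | simp)+
  then show ?thesis
    by (rule fampoly_cong) (simp add: P)
qed

lemma fampoly_homogeneous:
  assumes "fampoly d P"
  shows "P t (smult3 s v) = s^d * P t v"
proof -
  from assms obtain N C where P: "\<And>t v. P t v =
     (\<Sum>a\<le>N. \<Sum>i\<le>d. \<Sum>j\<le>d-i. C a i j * t^a * c0 v^i * c1 v^j * c2 v^(d-i-j))"
    unfolding fampoly_altdef by blast
  have "C a i j * t^a * c0 (smult3 s v)^i * c1 (smult3 s v)^j * c2 (smult3 s v)^(d-i-j)
      = s^d * (C a i j * t^a * c0 v^i * c1 v^j * c2 v^(d-i-j))" if "i \<le> d" "j \<le> d - i" for a i j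
  proof -
    have "s^d = s^i * s^j * s^(d-i-j)" using that by (simp flip: power_add)
    then show ?thesis by (simp add: smult3_def power_mult_distrib)
  qed
  then show ?thesis by (simp add: P sum_distrib_left)
qed

lemma fampoly_hompoly: "fampoly d P \<Longrightarrow> hompoly d (P t0)"
proof -
  assume "fampoly d P"
  then obtain N C where P: "\<And>t v. P t v =
     (\<Sum>a\<le>N. \<Sum>i\<le>d. \<Sum>j\<le>d-i. C a i j * t^a * c0 v^i * c1 v^j * c2 v^(d-i-j))"
    unfolding fampoly_altdef by blast
  have "P t0 (x,y,z) = (\<Sum>i\<le>d. \<Sum>j\<le>d-i. (\<Sum>a\<le>N. C a i j * t0^a) * x^i * y^j * z^(d-i-j))"
    for x y z
  proof -
    have "P t0 (x,y,z) = (\<Sum>a\<le>N. \<Sum>i\<le>d. \<Sum>j\<le>d-i. C a i j * t0^a * x^i * y^j * z^(d-i-j))"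
      by (simp add: P)
    also have "\<dots> = (\<Sum>i\<le>d. \<Sum>j\<le>d-i. \<Sum>a\<le>N. C a i j * t0^a * x^i * y^j * z^(d-i-j))"
      by (subst sum.swap) (intro sum.cong refl sum.swap)
    finally show ?thesis by (simp add: sum_distrib_right)
  qed
  then show ?thesis
    unfolding hompoly_def by (intro exI[of _ "\<lambda>i j. \<Sum>a\<le>N. C a i j * t0^a"]) blast
qed

lemma hompoly_iff_fampoly: "hompoly d P \<longleftrightarrow> fampoly d (\<lambda>t v. P v)"
proof
  assume "hompoly d P"
  then show "fampoly d (\<lambda>t v. P v)"
    unfolding hompoly_def fampoly_def by (intro exI[of _ 0]) auto
qed (rule fampoly_hompoly)

lemma smult3_simps [simp]:
  "c0 (smult3 s v) = s * c0 v" "c1 (smult3 s v) = s * c1 v" "c2 (smult3 s v) = s * c2 v"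
  by (simp_all add: smult3_def c0_def c1_def c2_def)

lemma pt_eqI: "c0 v = c0 w \<Longrightarrow> c1 v = c1 w \<Longrightarrow> c2 v = c2 w \<Longrightarrow> v = w"
  by (cases v; cases w) (simp add: c0_def c1_def c2_def)

lemma nz_iff: "nz v \<longleftrightarrow> c0 v \<noteq> 0 \<or> c1 v \<noteq> 0 \<or> c2 v \<noteq> 0"
  by (cases v) (auto simp: nz_def)

lemma smult3_smult3: "smult3 a (smult3 b v) = smult3 (a * b) (v::'k::comm_ring_1 pt)"
  by (rule pt_eqI) (simp_all add: mult.assoc)

lemma smult3_one [simp]: "smult3 1 (v::'k::comm_ring_1 pt) = v"
  by (rule pt_eqI) simp_all

lemma nz_smult3_iff: "nz (smult3 (s::'k::field) v) \<longleftrightarrow> s \<noteq> 0 \<and> nz v"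
  by (auto simp: nz_iff)

lemma smult3_right_cancel: "smult3 (a::'k::field) v = smult3 b v \<Longrightarrow> nz v \<Longrightarrow> a = b"
proof -
  assume eq: "smult3 a v = smult3 b v" and "nz v"
  have "a * c0 v = b * c0 v" "a * c1 v = b * c1 v" "a * c2 v = b * c2 v"
    using arg_cong[OF eq, of c0] arg_cong[OF eq, of c1] arg_cong[OF eq, of c2] by simp_all
  then show "a = b" using \<open>nz v\<close> by (auto simp: nz_iff)
qed

lemma hompoly_homogeneous: "hompoly d P \<Longrightarrow> P (smult3 s v) = s^d * P v"
  using fampoly_homogeneous[of d "\<lambda>t v. P v"] by (simp add: hompoly_iff_fampoly)

lemma hommap_homogeneous: "hommap d H \<Longrightarrow> H (smult3 s v) = smult3 (s^d) (H v)"
  unfolding hommap_def by (intro pt_eqI) (auto dest: hompoly_homogeneous)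

lemma fammap_hommap: "fammap d F \<Longrightarrow> hommap d (F t)"
  unfolding fammap_def hommap_def using fampoly_hompoly by blast

lemma fammap_homogeneous: "fammap d F \<Longrightarrow> F t (smult3 s v) = smult3 (s^d) (F t v)"
  by (rule hommap_homogeneous[OF fammap_hommap])

lemma hommap_zero: "hommap d H \<Longrightarrow> 0 < d \<Longrightarrow> H (0,0,0) = (0,0,0)"
  using hommap_homogeneous[of d H 0 "(0,0,0)"] by (simp add: smult3_def power_0_left)

lemma zopen_fam_nonvanishing: "fampoly d P \<Longrightarrow> zopen_fam {(t,x). nz x \<and> P t x \<noteq> 0}"
  unfolding zopen_fam_def by (intro exI[of _ "{P}"]) auto

lemma zopen2_nonvanishing: "hompoly d P \<Longrightarrow> zopen2 {x. nz x \<and> P x \<noteq> 0}"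
  unfolding zopen2_def by (intro exI[of _ "{P}"]) auto

lemma fam_nontrivI: "nz (F t v) \<Longrightarrow> fam_nontriv F"
  unfolding fam_nontriv_def by blast

lemma rat_valI:
  assumes "nz x" "fammap d F" "nz (F t x)" "c \<noteq> 0" "w = smult3 c (F t x)"
  shows "rat_val F t x w"
  unfolding rat_val_def
proof (intro conjI exI)
  show "fam_equiv F F" unfolding fam_equiv_def par3_def by (simp add: mult.commute)
qed (use assms in \<open>auto intro: fam_nontrivI simp: proj_eq_def\<close>)

lemma proj_eq_smult3: "nz v \<Longrightarrow> c \<noteq> 0 \<Longrightarrow> proj_eq v (smult3 c v)"
  unfolding proj_eq_def by blast

(* That no fibre of \<Lambda> vanishes identically is what makes the domains of definition of F
   and of its inverse G surject onto A^1. *)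
locale birational_family =
  fixes d :: nat and F G :: "'k::field \<Rightarrow> 'k pt \<Rightarrow> 'k pt" and \<Lambda> M :: "'k \<Rightarrow> 'k pt \<Rightarrow> 'k"
  assumes degree_pos: "0 < d"
    and fammap_F: "fammap d F" and fammap_G: "fammap d G"
    and fampoly_\<Lambda>: "\<exists>k. fampoly k \<Lambda>" and fampoly_M: "\<exists>k. fampoly k M"
    and G_F: "\<And>t x. G t (F t x) = smult3 (\<Lambda> t x) x"
    and F_G: "\<And>t w. F t (G t w) = smult3 (M t w) w"
    and \<Lambda>_nonvanishing: "\<And>t. \<exists>x. nz x \<and> \<Lambda> t x \<noteq> 0"
begin

lemma nz_F: assumes "nz x" "\<Lambda> t x \<noteq> 0" shows "nz (F t x)"
  unfolding nz_def
proof
  assume "F t x = (0,0,0)"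
  then have "G t (F t x) = (0,0,0)" using hommap_zero[OF fammap_hommap[OF fammap_G] degree_pos] by simp
  then show False using G_F[of t x] assms nz_smult3_iff[of "\<Lambda> t x" x] by (simp add: nz_def)
qed

lemma nz_G: assumes "nz w" "M t w \<noteq> 0" shows "nz (G t w)"
  unfolding nz_def
proof
  assume "G t w = (0,0,0)"
  then have "F t (G t w) = (0,0,0)" using hommap_zero[OF fammap_hommap[OF fammap_F] degree_pos] by simp
  then show False using F_G[of t w] assms nz_smult3_iff[of "M t w" w] by (simp add: nz_def)
qed

lemma M_F: assumes "nz x" "\<Lambda> t x \<noteq> 0" shows "M t (F t x) = \<Lambda> t x ^ d"
proof (rule smult3_right_cancel)
  show "smult3 (M t (F t x)) (F t x) = smult3 (\<Lambda> t x ^ d) (F t x)"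
    by (metis F_G G_F fammap_homogeneous[OF fammap_F])
qed (rule nz_F[OF assms])

lemma \<Lambda>_G: assumes "nz w" "M t w \<noteq> 0" shows "\<Lambda> t (G t w) = M t w ^ d"
proof (rule smult3_right_cancel)
  show "smult3 (\<Lambda> t (G t w)) (G t w) = smult3 (M t w ^ d) (G t w)"
    by (metis F_G G_F fammap_homogeneous[OF fammap_G])
qed (rule nz_G[OF assms])

lemma G_F_normalized: "\<Lambda> t x \<noteq> 0 \<Longrightarrow> x = smult3 (1 / \<Lambda> t x) (G t (F t x))"
  by (simp add: G_F smult3_smult3)

lemma F_G_normalized: "M t w \<noteq> 0 \<Longrightarrow> w = smult3 (1 / M t w) (F t (G t w))"
  by (simp add: F_G smult3_smult3)

lemma demazure_family: "demazure_family F"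
proof -
  obtain k l where k: "fampoly k \<Lambda>" and l: "fampoly l M" using fampoly_\<Lambda> fampoly_M by blast
  define U where "U = {(t,x). nz x \<and> \<Lambda> t x \<noteq> 0}"
  define V where "V = {(t,w). nz w \<and> M t w \<noteq> 0}"
  have U: "(t, F t x) \<in> V \<and> rat_val F t x (F t x) \<and> rat_val G t (F t x) x" if "(t,x) \<in> U" for t x
  proof -
    have x: "nz x" "\<Lambda> t x \<noteq> 0" using that by (auto simp: U_def)
    have Fx: "nz (F t x)" "M t (F t x) \<noteq> 0" using nz_F[OF x] M_F[OF x] x by simp_all
    have "nz (G t (F t x))" using x by (simp add: G_F nz_smult3_iff)
    then show ?thesis
      using Fx x rat_valI[OF x(1) fammap_F Fx(1), of 1] G_F_normalized[OF x(2)]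
        rat_valI[OF Fx(1) fammap_G _ _ G_F_normalized[OF x(2)]] by (simp add: V_def)
  qed
  have V: "(t, G t w) \<in> U \<and> rat_val G t w (G t w) \<and> rat_val F t (G t w) w" if "(t,w) \<in> V" for t w
  proof -
    have w: "nz w" "M t w \<noteq> 0" using that by (auto simp: V_def)
    have Gw: "nz (G t w)" "\<Lambda> t (G t w) \<noteq> 0" using nz_G[OF w] \<Lambda>_G[OF w] w by simp_all
    have "nz (F t (G t w))" using w by (simp add: F_G nz_smult3_iff)
    then show ?thesis
      using Gw w rat_valI[OF w(1) fammap_G Gw(1), of 1]
        rat_valI[OF Gw(1) fammap_F _ _ F_G_normalized[OF w(2)]] by (simp add: U_def)
  qed
  have "fst ` U = UNIV"
    using \<Lambda>_nonvanishing by (force simp: U_def image_iff)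
  moreover have "fst ` V = UNIV"
    using \<Lambda>_nonvanishing U by (force simp: U_def image_iff)
  moreover obtain x0 where x0: "nz x0" "\<Lambda> 0 x0 \<noteq> 0" using \<Lambda>_nonvanishing by blast
  then have "fam_nontriv F" "fam_nontriv G"
    using nz_F[OF x0] nz_G[OF nz_F[OF x0], of 0] M_F[OF x0] by (auto intro: fam_nontrivI)
  moreover have "zopen_fam U" "zopen_fam V"
    unfolding U_def V_def by (rule zopen_fam_nonvanishing[OF k] zopen_fam_nonvanishing[OF l])+
  ultimately show ?thesis
    unfolding demazure_family_def using fammap_F fammap_G U V by blast
qed

lemma fibre_open_nonempty:
  "zopen2 {x. nz x \<and> \<Lambda> t x \<noteq> 0} \<and> {x. nz x \<and> \<Lambda> t x \<noteq> 0} \<noteq> {}"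
proof -
  obtain k where "fampoly k \<Lambda>" using fampoly_\<Lambda> by blast
  then have "zopen2 {x. nz x \<and> \<Lambda> t x \<noteq> 0}" by (intro zopen2_nonvanishing fampoly_hompoly)
  then show ?thesis using \<Lambda>_nonvanishing[of t] by blast
qed

lemma birational_fibre: "birational_map (F t)"
proof -
  define W where "W = {x. nz x \<and> \<Lambda> t x \<noteq> 0}"
  define W' where "W' = {w. nz w \<and> M t w \<noteq> 0}"
  obtain k where "fampoly k M" using fampoly_M by blast
  then have "zopen2 W'" unfolding W'_def by (intro zopen2_nonvanishing fampoly_hompoly)
  moreover obtain x0 where x0: "nz x0" "\<Lambda> t x0 \<noteq> 0" using \<Lambda>_nonvanishing by blast
  then have "F t x0 \<in> W'" using nz_F[OF x0] M_F[OF x0] unfolding W'_def by simp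
  then have "W' \<noteq> {}" by blast
  moreover have "\<forall>x\<in>W. nz (F t x) \<and> nz (G t (F t x)) \<and> proj_eq x (G t (F t x))"
    unfolding W_def by (auto simp: G_F nz_smult3_iff intro: nz_F proj_eq_smult3)
  moreover have "\<forall>w\<in>W'. nz (G t w) \<and> nz (F t (G t w)) \<and> proj_eq w (F t (G t w))"
    unfolding W'_def by (auto simp: F_G nz_smult3_iff intro: nz_G proj_eq_smult3)
  moreover have "zopen2 W" "W \<noteq> {}" using fibre_open_nonempty unfolding W_def by blast+
  ultimately show ?thesis
    unfolding birational_map_def using fammap_hommap[OF fammap_F] fammap_hommap[OF fammap_G]
    by blast
qed

lemma fiber_rep_self: "fiber_rep F t (F t)"
proof -
  obtain x0 where x0: "nz x0" "\<Lambda> t x0 \<noteq> 0" using \<Lambda>_nonvanishing by blast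
  have "rat_val F t x (F t x)" if "nz x" "\<Lambda> t x \<noteq> 0" for x
    using rat_valI[OF that(1) fammap_F nz_F[OF that], of 1] by simp
  then show ?thesis
    unfolding fiber_rep_def using fibre_open_nonempty nz_F[OF x0] nz_F
    by (intro exI[of _ d] exI[of _ "{x. nz x \<and> \<Lambda> t x \<noteq> 0}"] conjI fammap_hommap[OF fammap_F])
      blast+
qed

lemma fiber_rep_identity:
  assumes scalar: "\<And>x. \<exists>c. F t x = smult3 c x"
  shows "fiber_rep F t (\<lambda>v. v)"
proof -
  have "hommap 1 (\<lambda>v::'k pt. v)"
    unfolding hommap_def hompoly_iff_fampoly using fampoly_x fampoly_y fampoly_z by auto
  moreover have "rat_val F t x x" if "nz x" "\<Lambda> t x \<noteq> 0" for x
  proof -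
    obtain c where c: "F t x = smult3 c x" using scalar by blast
    have "nz (F t x)" by (rule nz_F[OF that])
    then have "c \<noteq> 0" by (simp add: c nz_smult3_iff)
    then show ?thesis
      using rat_valI[OF that(1) fammap_F \<open>nz (F t x)\<close>, of "1 / c"] by (simp add: c smult3_smult3)
  qed
  ultimately show ?thesis
    unfolding fiber_rep_def using fibre_open_nonempty by blast
qed

end

lemma hommap_iff_fammap: "hommap d H \<longleftrightarrow> fammap d (\<lambda>t v. H v)"
  unfolding hommap_def fammap_def hompoly_iff_fampoly ..

lemma fammap_id: "fammap 1 (\<lambda>t v. v)"
  unfolding fammap_def using fampoly_x fampoly_y fampoly_z by blast

lemma fampoly_precompose: "fampoly d P \<Longrightarrow> fammap 1 L \<Longrightarrow> fampoly d (\<lambda>t v. P t (L t v))"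
  using fampoly_subst[of d P "\<lambda>t v. c0 (L t v)" "\<lambda>t v. c1 (L t v)" "\<lambda>t v. c2 (L t v)"]
  unfolding fammap_def c0_def c1_def c2_def by simp

lemma fammap_precompose: "fammap d H \<Longrightarrow> fammap 1 L \<Longrightarrow> fammap d (\<lambda>t v. H t (L t v))"
  unfolding fammap_def[of d] using fampoly_precompose by blast

(* colmap a b c is the linear map whose matrix has columns a, b, c; adjmap a b c is the
   adjugate matrix, so that each undoes the other up to the factor det3 a b c. *)
definition colmap :: "'k::comm_ring pt \<Rightarrow> 'k pt \<Rightarrow> 'k pt \<Rightarrow> 'k pt \<Rightarrow> 'k pt" where
  "colmap a b c y = (c0 y * c0 a + c1 y * c0 b + c2 y * c0 c,
                     c0 y * c1 a + c1 y * c1 b + c2 y * c1 c,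
                     c0 y * c2 a + c1 y * c2 b + c2 y * c2 c)"

definition adjmap :: "'k::comm_ring pt \<Rightarrow> 'k pt \<Rightarrow> 'k pt \<Rightarrow> 'k pt \<Rightarrow> 'k pt" where
  "adjmap a b c x = (det3 x b c, det3 a x c, det3 a b x)"

lemma colmap_simps [simp]:
  "c0 (colmap a b c y) = c0 y * c0 a + c1 y * c0 b + c2 y * c0 c"
  "c1 (colmap a b c y) = c0 y * c1 a + c1 y * c1 b + c2 y * c1 c"
  "c2 (colmap a b c y) = c0 y * c2 a + c1 y * c2 b + c2 y * c2 c"
  by (simp_all add: colmap_def)

lemma adjmap_simps [simp]:
  "c0 (adjmap a b c x) = det3 x b c" "c1 (adjmap a b c x) = det3 a x c" "c2 (adjmap a b c x) = det3 a b x"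
  by (simp_all add: adjmap_def)

lemma adjmap_colmap: "adjmap a b c (colmap a b c y) = smult3 (det3 a b c) (y::'k::comm_ring pt)"
  by (rule pt_eqI) (simp_all add: det3_def algebra_simps)

lemma colmap_adjmap: "colmap a b c (adjmap a b c x) = smult3 (det3 a b c) (x::'k::comm_ring pt)"
  by (rule pt_eqI) (simp_all add: det3_def algebra_simps)

lemma colmap_smult3: "colmap a b c (smult3 s y) = smult3 s (colmap a b c (y::'k::comm_ring pt))"
  by (rule pt_eqI) (simp_all add: algebra_simps)

lemma adjmap_smult3: "adjmap a b c (smult3 s x) = smult3 s (adjmap a b c (x::'k::comm_ring pt))"
  by (rule pt_eqI) (simp_all add: det3_def algebra_simps)

lemma add3_simps [simp]: "c0 (add3 v w) = c0 v + c0 w" "c1 (add3 v w) = c1 v + c1 w" "c2 (add3 v w) = c2 v + c2 w"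
  by (simp_all add: add3_def c0_def c1_def c2_def)

lemma colmap_add3: "colmap a b c (add3 y z) = add3 (colmap a b c y) (colmap a b c (z::'k::comm_ring pt))"
  by (rule pt_eqI) (simp_all add: algebra_simps)

lemma colmap_basis:
  "colmap a b c (1,0,0) = (a::'k::comm_ring_1 pt)" "colmap a b c (0,1,0) = b" "colmap a b c (0,0,1) = c"
  by (rule pt_eqI; simp)+

lemma fampoly_lincomb:
  "fammap d H \<Longrightarrow> fampoly d (\<lambda>t v. c0 (H t v) * \<alpha> + c1 (H t v) * \<beta> + c2 (H t v) * \<gamma>)"
  unfolding fammap_def by (intro fampoly_add) (simp_all add: mult.commute fampoly_cmult)

lemma fammap_colmap: "fammap d H \<Longrightarrow> fammap d (\<lambda>t v. colmap a b c (H t v))"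
  unfolding fammap_def[of d "\<lambda>t v. colmap a b c (H t v)"] colmap_simps by (intro conjI fampoly_lincomb)

lemma adjmap_as_colmap:
  "adjmap a b c x = colmap (adjmap a b c (1,0,0)) (adjmap a b c (0,1,0)) (adjmap a b c (0,0,1)) (x::'k::comm_ring_1 pt)"
  by (rule pt_eqI) (simp_all add: det3_def algebra_simps)

lemma fammap_adjmap: "fammap d H \<Longrightarrow> fammap d (\<lambda>t v. adjmap a b c (H t v))"
  using fammap_colmap[of d H "adjmap a b c (1,0,0)" "adjmap a b c (0,1,0)" "adjmap a b c (0,0,1)"]
  by (simp only: adjmap_as_colmap[symmetric])

lemma hompoly_precompose: "hompoly d P \<Longrightarrow> hommap 1 L \<Longrightarrow> hompoly d (\<lambda>x. P (L x))"
  unfolding hompoly_iff_fampoly hommap_iff_fammap by (rule fampoly_precompose)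

lemma hommap_precompose: "hommap d H \<Longrightarrow> hommap 1 L \<Longrightarrow> hommap d (\<lambda>x. H (L x))"
  unfolding hommap_iff_fammap by (rule fammap_precompose)

lemma hommap_colmap: "hommap d H \<Longrightarrow> hommap d (\<lambda>x. colmap a b c (H x))"
  unfolding hommap_iff_fammap by (rule fammap_colmap)

lemma hommap_adjmap: "hommap d H \<Longrightarrow> hommap d (\<lambda>x. adjmap a b c (H x))"
  unfolding hommap_iff_fammap by (rule fammap_adjmap)

lemma hommap_id: "hommap 1 (\<lambda>x. x)"
  unfolding hommap_iff_fammap by (rule fammap_id)

lemma hommap_smult3: "hommap d H \<Longrightarrow> hommap d (\<lambda>x. smult3 s (H x))"
  unfolding hommap_def hompoly_iff_fampoly by (auto intro: fampoly_cmult)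

lemma hompoly_cmult: "hompoly d P \<Longrightarrow> hompoly d (\<lambda>x. s * P x)"
  unfolding hompoly_iff_fampoly by (rule fampoly_cmult)

definition net :: "('k::comm_ring_1 pt \<Rightarrow> 'k pt) \<Rightarrow> ('k pt \<Rightarrow> 'k) set" where
  "net H = {(\<lambda>v. \<alpha> * c0 (H v) + \<beta> * c1 (H v) + \<gamma> * c2 (H v)) | \<alpha> \<beta> \<gamma>. True}"

definition conics :: "'k::comm_ring_1 pt \<Rightarrow> 'k second_pt \<Rightarrow> 'k pt \<Rightarrow> ('k pt \<Rightarrow> 'k) set" where
  "conics p1 p2 p3 = {Q. hompoly 2 Q \<and> Q p1 = 0 \<and> second_cond p1 p2 Q \<and> Q p3 = 0}"

definition map_second_pt :: "('k pt \<Rightarrow> 'k pt) \<Rightarrow> 'k second_pt \<Rightarrow> 'k second_pt" where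
  "map_second_pt f s = (case s of Proper w \<Rightarrow> Proper (f w) | Infnear v \<Rightarrow> Infnear (f v))"

lemma net_precompose: "net (\<lambda>x. H (f x)) = (\<lambda>Q x. Q (f x)) ` net H"
  unfolding net_def by fastforce

lemma net_colmap_subset: "net (\<lambda>x. colmap a b c (H x)) \<subseteq> net H"
proof
  fix Q assume "Q \<in> net (\<lambda>x. colmap a b c (H x))"
  then obtain \<alpha> \<beta> \<gamma> where "Q = (\<lambda>v. \<alpha> * c0 (colmap a b c (H v)) + \<beta> * c1 (colmap a b c (H v))
      + \<gamma> * c2 (colmap a b c (H v)))"
    unfolding net_def by blast
  then have "Q = (\<lambda>v. (\<alpha> * c0 a + \<beta> * c1 a + \<gamma> * c2 a) * c0 (H v) + (\<alpha> * c0 b + \<beta> * c1 b + \<gamma> * c2 b) * c1 (H v)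
      + (\<alpha> * c0 c + \<beta> * c1 c + \<gamma> * c2 c) * c2 (H v))"
    by (simp add: algebra_simps)
  then show "Q \<in> net H" unfolding net_def by blast
qed

lemma net_smult3_subset: "net (\<lambda>x. smult3 s (H x)) \<subseteq> net H"
proof
  fix Q assume "Q \<in> net (\<lambda>x. smult3 s (H x))"
  then obtain \<alpha> \<beta> \<gamma> where "Q = (\<lambda>v. \<alpha> * c0 (smult3 s (H v)) + \<beta> * c1 (smult3 s (H v))
      + \<gamma> * c2 (smult3 s (H v)))"
    unfolding net_def by blast
  then have "Q = (\<lambda>v. (\<alpha> * s) * c0 (H v) + (\<beta> * s) * c1 (H v) + (\<gamma> * s) * c2 (H v))"
    by (simp add: mult.assoc)
  then show "Q \<in> net H" unfolding net_def by blast
qed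

lemma net_colmap:
  assumes "det3 a b c \<noteq> (0::'k::field)"
  shows "net (\<lambda>x. colmap a b c (H x)) = net H"
proof
  show "net H \<subseteq> net (\<lambda>x. colmap a b c (H x))"
  proof -
    have "net H = net (\<lambda>x. smult3 (1 / det3 a b c) (adjmap a b c (colmap a b c (H x))))"
      using assms by (simp add: adjmap_colmap smult3_smult3)
    also have "\<dots> \<subseteq> net (\<lambda>x. adjmap a b c (colmap a b c (H x)))"
      by (rule net_smult3_subset)
    also have "\<dots> \<subseteq> net (\<lambda>x. colmap a b c (H x))"
      by (subst adjmap_as_colmap) (rule net_colmap_subset)
    finally show ?thesis .
  qed
qed (rule net_colmap_subset)

lemma conics_cmult: "R \<in> conics p s q \<Longrightarrow> (\<lambda>v. k * R v) \<in> conics p s q"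
  by (cases s) (auto simp: conics_def second_cond_def algebra_simps intro: hompoly_cmult)

lemma second_cond_colmap:
  "second_cond (colmap a b c (1,0,0)) (map_second_pt (colmap a b c) s) Q
     \<longleftrightarrow> second_cond (1,0,0) s (\<lambda>y. Q (colmap a b c y))"
  by (cases s) (simp_all add: second_cond_def map_second_pt_def colmap_add3)

lemma conics_colmap_iff:
  "Q \<in> conics (colmap a b c (1,0,0)) (map_second_pt (colmap a b c) s) (colmap a b c q)
     \<longleftrightarrow> hompoly 2 Q \<and> (\<lambda>y. Q (colmap a b c y)) \<in> conics (1,0,0) s q"
proof -
  have "hompoly 2 Q \<Longrightarrow> hompoly 2 (\<lambda>y. Q (colmap a b c y))"
    by (rule hompoly_precompose[OF _ hommap_colmap[OF hommap_id]])
  then show ?thesis unfolding conics_def second_cond_colmap by auto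
qed

locale coords =
  fixes a b c :: "'k::field pt"
  assumes det_nonzero: "det3 a b c \<noteq> 0"
begin

abbreviation "D \<equiv> det3 a b c"
abbreviation "Pm \<equiv> colmap a b c"
abbreviation "Am \<equiv> adjmap a b c"

lemma nz_Pm: assumes "nz y" shows "nz (Pm y)"
  unfolding nz_def
proof
  assume "Pm y = (0,0,0)"
  then have "smult3 D y = (0,0,0)" using adjmap_colmap[of a b c y] by (simp add: adjmap_def det3_def)
  then show False using assms det_nonzero nz_smult3_iff[of D y] by (simp add: nz_def)
qed

lemma conics_transport:
  "conics a (map_second_pt Pm s) (Pm q) = (\<lambda>R x. R (Am x)) ` conics (1,0,0) s q"
proof -
  have Pm_Am: "Q (Pm (Am x)) = D^2 * Q x" if "hompoly 2 Q" for Q x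
    by (simp add: colmap_adjmap hompoly_homogeneous[OF that])
  have conics_iff: "Q \<in> conics a (map_second_pt Pm s) (Pm q) \<longleftrightarrow> hompoly 2 Q \<and> (\<lambda>y. Q (Pm y)) \<in> conics (1,0,0) s q"
    for Q using conics_colmap_iff[where a=a and b=b and c=c and s=s and q=q and Q=Q] by (simp add: colmap_basis)
  show ?thesis
  proof (intro equalityI subsetI)
    fix Q assume "Q \<in> conics a (map_second_pt Pm s) (Pm q)"
    then have Q: "hompoly 2 Q" "(\<lambda>y. Q (Pm y)) \<in> conics (1,0,0) s q" using conics_iff by blast+
    have "Q = (\<lambda>x. (\<lambda>y. 1 / D^2 * Q (Pm y)) (Am x))"
      using det_nonzero by (simp add: Pm_Am[OF Q(1)])
    moreover have "(\<lambda>y. 1 / D^2 * Q (Pm y)) \<in> conics (1,0,0) s q"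
      by (rule conics_cmult[OF Q(2)])
    ultimately show "Q \<in> (\<lambda>R x. R (Am x)) ` conics (1,0,0) s q" by (rule image_eqI)
  next
    fix Q assume "Q \<in> (\<lambda>R x. R (Am x)) ` conics (1,0,0) s q"
    then obtain R where R: "R \<in> conics (1,0,0) s q" and Q: "Q = (\<lambda>x. R (Am x))" by blast
    have hR: "hompoly 2 R" using R by (simp add: conics_def)
    have "hompoly 2 Q"
      unfolding Q by (rule hompoly_precompose[OF hR hommap_adjmap[OF hommap_id]])
    moreover have "(\<lambda>y. Q (Pm y)) = (\<lambda>y. D^2 * R y)"
      by (simp add: Q adjmap_colmap hompoly_homogeneous[OF hR])
    ultimately show "Q \<in> conics a (map_second_pt Pm s) (Pm q)"
      using conics_iff conics_cmult[OF R] by simp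
  qed
qed

lemma net_transport:
  assumes "net h = conics (1,0,0) s q"
  shows "net (\<lambda>x. Pm (h (Am x))) = conics a (map_second_pt Pm s) (Pm q)"
  using assms by (simp add: net_colmap[OF det_nonzero] net_precompose conics_transport)

lemma no_common_factor_transport:
  assumes h: "hommap d h" and ncf: "no_common_factor d h"
  shows "no_common_factor d (\<lambda>x. Pm (h (Am x)))"
  unfolding no_common_factor_def
proof
  assume "\<exists>k L M. 0 < k \<and> k \<le> d \<and> hompoly k L \<and> (\<exists>v. L v \<noteq> 0) \<and> hommap (d - k) M
        \<and> (\<forall>v. Pm (h (Am v)) = smult3 (L v) (M v))"
  then obtain k L M v0 where k: "0 < k" "k \<le> d" and L: "hompoly k L" and v0: "L v0 \<noteq> 0"
    and M: "hommap (d - k) M" and factor: "\<And>v. Pm (h (Am v)) = smult3 (L v) (M v)" by blast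
  define L' where "L' y = L (Pm y)" for y
  define M' where "M' y = smult3 (1 / D^(Suc d)) (Am (M (Pm y)))" for y
  have "hompoly k L'" unfolding L'_def by (rule hompoly_precompose[OF L hommap_colmap[OF hommap_id]])
  moreover have "L' (Am v0) \<noteq> 0"
    using det_nonzero v0 by (simp add: L'_def colmap_adjmap hompoly_homogeneous[OF L])
  moreover have "hommap (d - k) M'"
    unfolding M'_def by (intro hommap_smult3 hommap_adjmap hommap_precompose[OF M hommap_colmap[OF hommap_id]])
  moreover have "h y = smult3 (L' y) (M' y)" for y
  proof -
    have "smult3 (D^Suc d) (h y) = Am (Pm (h (Am (Pm y))))"
      by (simp add: adjmap_colmap hommap_homogeneous[OF h] smult3_smult3 mult.commute)
    also have "\<dots> = smult3 (L' y) (Am (M (Pm y)))"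
      by (simp add: factor adjmap_smult3 L'_def)
    finally have scaled: "smult3 (D^Suc d) (h y) = smult3 (L' y) (Am (M (Pm y)))" .
    have "h y = smult3 (1 / D^Suc d) (smult3 (D^Suc d) (h y))"
      using det_nonzero by (simp add: smult3_smult3)
    also have "\<dots> = smult3 (L' y) (M' y)"
      unfolding scaled by (simp add: M'_def smult3_smult3 mult.commute)
    finally show ?thesis .
  qed
  ultimately show False using ncf k unfolding no_common_factor_def by blast
qed

end

lemma hompoly_1_linear:
  assumes "hompoly 1 P"
  shows "P v = P (1,0,0) * c0 v + P (0,1,0) * c1 v + P (0,0,1) * c2 v"
proof -
  obtain C where h: "\<forall>x y z. P (x,y,z) = (\<Sum>i\<le>1. \<Sum>j\<le>1-i. C i j * x^i * y^j * z^(1-i-j))"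
    using assms unfolding hompoly_def by blast
  have e: "P (x,y,z) = C 1 0 * x + C 0 1 * y + C 0 0 * z" for x y z
    using h[rule_format, of x y z] by (simp add: atMost_Suc)
  show ?thesis using e[of "c0 v" "c1 v" "c2 v"] e[of 1 0 0] e[of 0 1 0] e[of 0 0 1]
    by (cases v) auto
qed

lemma hompoly_0_constant:
  assumes "hompoly 0 P"
  shows "P v = P (0,0,0)"
proof -
  obtain C where h: "\<forall>x y z. P (x,y,z) = (\<Sum>i\<le>0. \<Sum>j\<le>0-i. C i j * x^i * y^j * z^(0-i-j))"
    using assms unfolding hompoly_def by blast
  then show ?thesis by (cases v) auto
qed

lemma hompoly_2_quadratic:
  assumes "hompoly 2 P"
  shows "\<exists>a b c d e f. \<forall>x y z. P (x,y,z) = a*x^2 + b*y^2 + c*z^2 + d*x*y + e*x*z + f*y*z"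
proof -
  obtain C where h: "\<forall>x y z. P (x,y,z) = (\<Sum>i\<le>2. \<Sum>j\<le>2-i. C i j * x^i * y^j * z^(2-i-j))"
    using assms unfolding hompoly_def by blast
  have "P (x,y,z) = C 2 0*x^2 + C 0 2*y^2 + C 0 0*z^2 + C 1 1*x*y + C 1 0*x*z + C 0 1*y*z" for x y z
    using h[rule_format, of x y z] by (simp add: atMost_Suc numeral_2_eq_2 power2_eq_square algebra_simps)
  then show ?thesis by blast
qed

lemma no_common_factor_quadraticI:
  fixes h :: "'k::field pt \<Rightarrow> 'k pt"
  assumes quadratic_factor: "\<And>m L. (\<And>v. h v = smult3 (L v) m) \<Longrightarrow> False"
    and linear_factor: "\<And>a b c p1 p2 p3 q1 q2 q3 r1 r2 r3. (\<And>x y z. h (x,y,z) =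
         smult3 (a*x + b*y + c*z) (p1*x + p2*y + p3*z, q1*x + q2*y + q3*z, r1*x + r2*y + r3*z)) \<Longrightarrow> False"
  shows "no_common_factor 2 h"
  unfolding no_common_factor_def
proof
  assume "\<exists>k L M. 0 < k \<and> k \<le> 2 \<and> hompoly k L \<and> (\<exists>v. L v \<noteq> 0) \<and> hommap (2 - k) M
        \<and> (\<forall>v. h v = smult3 (L v) (M v))"
  then obtain k L M where k: "0 < k" "k \<le> 2" and L: "hompoly k L"
    and M: "hommap (2 - k) M" and eq: "\<And>v. h v = smult3 (L v) (M v)" by blast
  have "k = 1 \<or> k = 2" using k by auto
  then show False
  proof
    assume "k = 2"
    then have M0: "hompoly 0 (\<lambda>v. c0 (M v))" "hompoly 0 (\<lambda>v. c1 (M v))" "hompoly 0 (\<lambda>v. c2 (M v))"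
      using M by (auto simp: hommap_def)
    have "M v = M (0,0,0)" for v
      using hompoly_0_constant[OF M0(1), of v] hompoly_0_constant[OF M0(2), of v] hompoly_0_constant[OF M0(3), of v]
      by (intro pt_eqI) auto
    then show False using quadratic_factor[of L "M (0,0,0)"] eq by metis
  next
    assume "k = 1"
    then have M1: "hompoly 1 (\<lambda>v. c0 (M v))" "hompoly 1 (\<lambda>v. c1 (M v))" "hompoly 1 (\<lambda>v. c2 (M v))"
      and L1: "hompoly 1 L"
      using M L by (auto simp: hommap_def)
    show False
    proof (rule linear_factor)
      fix x y z
      show "h (x,y,z) = smult3 (L (1,0,0)*x + L (0,1,0)*y + L (0,0,1)*z)
         (c0 (M (1,0,0))*x + c0 (M (0,1,0))*y + c0 (M (0,0,1))*z,
          c1 (M (1,0,0))*x + c1 (M (0,1,0))*y + c1 (M (0,0,1))*z,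
          c2 (M (1,0,0))*x + c2 (M (0,1,0))*y + c2 (M (0,0,1))*z)"
        unfolding eq
        using hompoly_1_linear[OF L1, of "(x,y,z)"] hompoly_1_linear[OF M1(1), of "(x,y,z)"]
          hompoly_1_linear[OF M1(2), of "(x,y,z)"] hompoly_1_linear[OF M1(3), of "(x,y,z)"]
        by (intro pt_eqI) (simp_all add: mult.commute)
    qed
  qed
qed

(* h 0 = z \<cdot> id is the identity of P^2; for t \<noteq> 0, net_h says that h t has base points
   [1:0:0], s and q t. *)
locale standard_degeneration =
  fixes h g :: "'k::field \<Rightarrow> 'k pt \<Rightarrow> 'k pt" and l m :: "'k \<Rightarrow> 'k pt \<Rightarrow> 'k"
    and s :: "'k second_pt" and q :: "'k \<Rightarrow> 'k pt"
  assumes fammap_h: "fammap 2 h" and fammap_g: "fammap 2 g"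
    and fampoly_l: "fampoly 3 l" and fampoly_m: "fampoly 3 m"
    and g_h: "\<And>t x. g t (h t x) = smult3 (l t x) x"
    and h_g: "\<And>t x. h t (g t x) = smult3 (m t x) x"
    and l_e3: "\<And>t. l t (0,0,1) = 1"
    and h_0: "\<And>y. h 0 y = smult3 (c2 y) y"
    and no_common_factor_h: "\<And>t. t \<noteq> 0 \<Longrightarrow> no_common_factor 2 (h t)"
    and net_h: "\<And>t. t \<noteq> 0 \<Longrightarrow> net (h t) = conics (1,0,0) s (q t)"

definition proper_quad :: "'k::field \<Rightarrow> 'k pt \<Rightarrow> 'k pt" where
  "proper_quad t v = (c0 v * (c2 v - t * c1 v),
     c1 v * (c2 v - t * c0 v),
     c2 v * c2 v - t * t * c0 v * c1 v)"

definition proper_quad_inv :: "'k::field \<Rightarrow> 'k pt \<Rightarrow> 'k pt" where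
  "proper_quad_inv t v = (c0 v * (c2 v - t * c0 v),
     c1 v * (c2 v - t * c1 v),
     (c2 v - t * c0 v) * (c2 v - t * c1 v))"

definition proper_quad_lambda :: "'k::field \<Rightarrow> 'k pt \<Rightarrow> 'k" where
  "proper_quad_lambda t v = c2 v * (c2 v - t * c0 v) * (c2 v - t * c1 v)"

definition proper_quad_mu :: "'k::field \<Rightarrow> 'k pt \<Rightarrow> 'k" where
  "proper_quad_mu t v = (c2 v - t * c0 v) * (c2 v - t * c1 v) * (c2 v - t * c0 v - t * c1 v)"

lemmas proper_quad_defs =
  proper_quad_def proper_quad_inv_def proper_quad_lambda_def proper_quad_mu_def

lemma no_common_factor_proper_quad: assumes t: "t \<noteq> 0" shows "no_common_factor 2 (proper_quad t)"
proof (rule no_common_factor_quadraticI)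
  fix m :: "'a pt" and L assume eq: "\<And>v. proper_quad t v = smult3 (L v) m"
  have e3: "(0,0,1) = smult3 (L (0,0,1)) m" using eq[of "(0,0,1)"] by (simp add: proper_quad_def)
  have "L (0,0,1) * c2 m = 1" "L (0,0,1) * c0 m = 0"
    using arg_cong[OF e3, of c2] arg_cong[OF e3, of c0] by simp_all
  then have "c0 m = 0" by auto
  moreover have "1 = L (1,0,1) * c0 m" using arg_cong[OF eq[of "(1,0,1)"], of c0] by (simp add: proper_quad_def)
  ultimately show False by simp
next
  fix a b c p1 p2 p3 q1 q2 q3 r1 r2 r3 :: 'a
  assume eq: "\<And>x y z. proper_quad t (x,y,z) =
         smult3 (a*x + b*y + c*z) (p1*x + p2*y + p3*z, q1*x + q2*y + q3*z, r1*x + r2*y + r3*z)"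
  note E = eq[THEN arg_cong, of c0] eq[THEN arg_cong, of c1] eq[THEN arg_cong, of c2]
  have e1: "c * r3 = 1" "c * p3 = 0" "c * q3 = 0" using E[of 0 0 1] by (simp_all add: proper_quad_def)
  have e2: "1 = (a + c) * (p1 + p3)" using E(1)[of 1 0 1] by (simp add: proper_quad_def)
  have e3: "a * p1 = 0" "b * q2 = 0" using E(1)[of 1 0 0] E(2)[of 0 1 0] by (simp_all add: proper_quad_def)
  have e4: "1 = (b + c) * (q2 + q3)" using E(2)[of 0 1 1] by (simp add: proper_quad_def)
  have e6: "- t = (a + b) * (p1 + p2)" using E(1)[of 1 1 0] by (simp add: proper_quad_def)
  have "c \<noteq> 0" using e1 by auto
  then have "p3 = 0" "q3 = 0" using e1 by auto
  then have "(a + c) * p1 = 1" "(b + c) * q2 = 1" using e2 e4 by simp_all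
  then have "p1 \<noteq> 0" "q2 \<noteq> 0" by auto
  then have "a = 0" "b = 0" using e3 by auto
  then show False using e6 t by simp
qed

lemma net_proper_quad: "net (proper_quad t) = conics (1,0,0) (Proper (0,1,0)) (1,1,t)"
proof
  show "net (proper_quad t) \<subseteq> conics (1,0,0) (Proper (0,1,0)) (1,1,t)"
  proof
    fix Q assume "Q \<in> net (proper_quad t)"
    then obtain \<alpha> \<beta> \<gamma> where Q: "Q = (\<lambda>v. \<alpha> * c0 (proper_quad t v) + \<beta> * c1 (proper_quad t v) + \<gamma> * c2 (proper_quad t v))"
      unfolding net_def by blast
    have "hompoly 2 Q" unfolding Q hompoly_iff_fampoly proper_quad_def c012_simps
      by (rule fampoly_intros | simp)+
    then show "Q \<in> conics (1,0,0) (Proper (0,1,0)) (1,1,t)"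
      unfolding conics_def second_cond_def by (simp add: Q proper_quad_def)
  qed
  show "conics (1,0,0) (Proper (0,1,0)) (1,1,t) \<subseteq> net (proper_quad t)"
  proof
    fix Q assume "Q \<in> conics (1,0,0) (Proper (0,1,0)) (1,1,t)"
    then have h: "hompoly 2 Q" "Q (1,0,0) = 0" "Q (0,1,0) = 0" "Q (1,1,t) = 0"
      by (auto simp: conics_def second_cond_def)
    obtain A B C D E F where Q: "\<And>x y z. Q (x,y,z) = A*x^2 + B*y^2 + C*z^2 + D*x*y + E*x*z + F*y*z"
      using hompoly_2_quadratic[OF h(1)] by blast
    have "A = 0" "B = 0" using h(2-3) by (simp_all add: Q)
    have s: "D + (E * t + (F * t + C * t^2)) = 0" using h(2-4) by (simp add: Q algebra_simps)
    have Deq: "D = - (E * t + (F * t + C * t^2))" by (subst eq_neg_iff_add_eq_0) (rule s)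
    have "Q = (\<lambda>v. E * c0 (proper_quad t v) + F * c1 (proper_quad t v) + C * c2 (proper_quad t v))"
      by (intro ext) (simp add: Q proper_quad_def Deq \<open>A = 0\<close> \<open>B = 0\<close> split_paired_all algebra_simps power2_eq_square)
    then show "Q \<in> net (proper_quad t)" unfolding net_def by blast
  qed
qed

lemma standard_degeneration_proper_quad:
  "standard_degeneration proper_quad proper_quad_inv proper_quad_lambda proper_quad_mu
     (Proper (0,1,0)) (\<lambda>t. (1,1,t))"
proof
  show "fammap 2 proper_quad" "fammap 2 proper_quad_inv"
    "fampoly 3 proper_quad_lambda" "fampoly 3 proper_quad_mu"
    unfolding fammap_def proper_quad_defs c012_simps by (rule conjI | rule fampoly_intros | simp)+
  show "proper_quad_inv t (proper_quad t x) = smult3 (proper_quad_lambda t x) x"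
    "proper_quad t (proper_quad_inv t x) = smult3 (proper_quad_mu t x) x" for t x
    by (rule pt_eqI; simp add: proper_quad_defs algebra_simps)+
  show "proper_quad_lambda t (0,0,1) = 1" for t
    by (simp add: proper_quad_lambda_def)
  show "proper_quad 0 y = smult3 (c2 y) y" for y
    by (rule pt_eqI) (simp_all add: proper_quad_def mult.commute)
qed (simp_all add: no_common_factor_proper_quad net_proper_quad)

definition infnear_quad :: "'k::field \<Rightarrow> 'k pt \<Rightarrow> 'k pt" where
  "infnear_quad t v = (c0 v * c2 v,
     c1 v * (c2 v - t * c1 v),
     (c2 v - t * c1 v) * (c2 v + t * c1 v))"

definition infnear_quad_inv :: "'k::field \<Rightarrow> 'k pt \<Rightarrow> 'k pt" where
  "infnear_quad_inv t v = (c0 v * (c2 v - 2 * t * c1 v),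
     c1 v * (c2 v - t * c1 v),
     (c2 v - t * c1 v) * (c2 v - t * c1 v))"

definition infnear_quad_lambda :: "'k::field \<Rightarrow> 'k pt \<Rightarrow> 'k" where
  "infnear_quad_lambda t v = c2 v * (c2 v - t * c1 v) * (c2 v - t * c1 v)"

definition infnear_quad_mu :: "'k::field \<Rightarrow> 'k pt \<Rightarrow> 'k" where
  "infnear_quad_mu t v = (c2 v - t * c1 v) * (c2 v - t * c1 v) * (c2 v - 2 * t * c1 v)"

lemmas infnear_quad_defs =
  infnear_quad_def infnear_quad_inv_def infnear_quad_lambda_def infnear_quad_mu_def

lemma no_common_factor_infnear_quad: assumes t: "t \<noteq> 0" shows "no_common_factor 2 (infnear_quad t)"
proof (rule no_common_factor_quadraticI)
  fix m :: "'a pt" and L assume eq: "\<And>v. infnear_quad t v = smult3 (L v) m"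
  have e3: "(0,0,1) = smult3 (L (0,0,1)) m" using eq[of "(0,0,1)"] by (simp add: infnear_quad_def)
  have "L (0,0,1) * c2 m = 1" "L (0,0,1) * c0 m = 0"
    using arg_cong[OF e3, of c2] arg_cong[OF e3, of c0] by simp_all
  then have "c0 m = 0" by auto
  moreover have "1 = L (1,0,1) * c0 m" using arg_cong[OF eq[of "(1,0,1)"], of c0] by (simp add: infnear_quad_def)
  ultimately show False by simp
next
  fix a b c p1 p2 p3 q1 q2 q3 r1 r2 r3 :: 'a
  assume eq: "\<And>x y z. infnear_quad t (x,y,z) =
         smult3 (a*x + b*y + c*z) (p1*x + p2*y + p3*z, q1*x + q2*y + q3*z, r1*x + r2*y + r3*z)"
  note E = eq[THEN arg_cong, of c0] eq[THEN arg_cong, of c1] eq[THEN arg_cong, of c2]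
  have e1: "c * r3 = 1" "c * p3 = 0" using E[of 0 0 1] by (simp_all add: infnear_quad_def)
  have e2: "1 = (a + c) * (p1 + p3)" using E(1)[of 1 0 1] by (simp add: infnear_quad_def)
  have e3: "a * p1 = 0" "b * p2 = 0" using E(1)[of 1 0 0] E(1)[of 0 1 0] by (simp_all add: infnear_quad_def)
  have e4: "- t = b * q2" using E(2)[of 0 1 0] by (simp add: infnear_quad_def)
  have e5: "0 = (a + b) * (p1 + p2)" using E(1)[of 1 1 0] by (simp add: infnear_quad_def)
  have "c \<noteq> 0" using e1 by auto
  then have "p3 = 0" using e1 by auto
  then have "(a + c) * p1 = 1" using e2 by simp
  then have "p1 \<noteq> 0" by auto
  then have "a = 0" using e3 by auto
  have "b \<noteq> 0" using e4 t by auto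
  then have "p2 = 0" using e3 by auto
  then show False using e5 \<open>a = 0\<close> \<open>b \<noteq> 0\<close> \<open>p1 \<noteq> 0\<close> by simp
qed

lemma net_infnear_quad: "net (infnear_quad t) = conics (1,0,0) (Infnear (0,1,0)) (0,1,t)"
proof
  show "net (infnear_quad t) \<subseteq> conics (1,0,0) (Infnear (0,1,0)) (0,1,t)"
  proof
    fix Q assume "Q \<in> net (infnear_quad t)"
    then obtain \<alpha> \<beta> \<gamma> where Q: "Q = (\<lambda>v. \<alpha> * c0 (infnear_quad t v) + \<beta> * c1 (infnear_quad t v) + \<gamma> * c2 (infnear_quad t v))"
      unfolding net_def by blast
    have "hompoly 2 Q" unfolding Q hompoly_iff_fampoly infnear_quad_def c012_simps
      by (rule fampoly_intros | simp)+
    then show "Q \<in> conics (1,0,0) (Infnear (0,1,0)) (0,1,t)"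
      unfolding conics_def second_cond_def by (simp add: Q infnear_quad_def add3_def algebra_simps)
  qed
  show "conics (1,0,0) (Infnear (0,1,0)) (0,1,t) \<subseteq> net (infnear_quad t)"
  proof
    fix Q assume "Q \<in> conics (1,0,0) (Infnear (0,1,0)) (0,1,t)"
    then have h: "hompoly 2 Q" "Q (1,0,0) = 0" "Q (1,1,0) - Q (1,0,0) - Q (0,1,0) = 0" "Q (0,1,t) = 0"
      by (auto simp: conics_def second_cond_def add3_def)
    obtain A B C D E F where Q: "\<And>x y z. Q (x,y,z) = A*x^2 + B*y^2 + C*z^2 + D*x*y + E*x*z + F*y*z"
      using hompoly_2_quadratic[OF h(1)] by blast
    have "A = 0" "D = 0" using h(2-3) by (simp_all add: Q)
    have s: "B + (F * t + C * t^2) = 0" using h(2-4) by (simp add: Q algebra_simps)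
    have Beq: "B = - (F * t + C * t^2)" by (subst eq_neg_iff_add_eq_0) (rule s)
    have "Q = (\<lambda>v. E * c0 (infnear_quad t v) + F * c1 (infnear_quad t v) + C * c2 (infnear_quad t v))"
      by (intro ext) (simp add: Q infnear_quad_def Beq \<open>A = 0\<close> \<open>D = 0\<close> split_paired_all algebra_simps power2_eq_square)
    then show "Q \<in> net (infnear_quad t)" unfolding net_def by blast
  qed
qed

lemma standard_degeneration_infnear_quad:
  "standard_degeneration infnear_quad infnear_quad_inv infnear_quad_lambda infnear_quad_mu
     (Infnear (0,1,0)) (\<lambda>t. (0,1,t))"
proof
  show "fammap 2 infnear_quad" "fammap 2 infnear_quad_inv"
    "fampoly 3 infnear_quad_lambda" "fampoly 3 infnear_quad_mu"
    unfolding fammap_def infnear_quad_defs c012_simps by (rule conjI | rule fampoly_intros | simp)+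
  show "infnear_quad_inv t (infnear_quad t x) = smult3 (infnear_quad_lambda t x) x"
    "infnear_quad t (infnear_quad_inv t x) = smult3 (infnear_quad_mu t x) x" for t x
    by (rule pt_eqI; simp add: infnear_quad_defs algebra_simps)+
  show "infnear_quad_lambda t (0,0,1) = 1" for t
    by (simp add: infnear_quad_lambda_def)
  show "infnear_quad 0 y = smult3 (c2 y) y" for y
    by (rule pt_eqI) (simp_all add: infnear_quad_def mult.commute)
qed (simp_all add: no_common_factor_infnear_quad net_infnear_quad)

context coords
begin

lemma birational_family_transported:
  assumes "standard_degeneration h g l m s q"
  shows "birational_family 2 (\<lambda>t x. Pm (h t (Am x))) (\<lambda>t x. Pm (g t (Am x)))
    (\<lambda>t x. D^3 * l t (Am x)) (\<lambda>t x. D^3 * m t (Am x))"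
proof
  interpret standard_degeneration h g l m s q by (rule assms)
  show "fammap 2 (\<lambda>t x. Pm (h t (Am x)))" "fammap 2 (\<lambda>t x. Pm (g t (Am x)))"
    by (intro fammap_colmap fammap_precompose[OF _ fammap_adjmap[OF fammap_id]] fammap_h fammap_g)+
  show "\<exists>k. fampoly k (\<lambda>t x. D^3 * l t (Am x))" "\<exists>k. fampoly k (\<lambda>t x. D^3 * m t (Am x))"
    by (intro exI[of _ 3] fampoly_cmult fampoly_precompose[OF _ fammap_adjmap[OF fammap_id]] fampoly_l fampoly_m)+
  show "Pm (g t (Am (Pm (h t (Am x))))) = smult3 (D^3 * l t (Am x)) x"
    "Pm (h t (Am (Pm (g t (Am x))))) = smult3 (D^3 * m t (Am x)) x" for t x
    by (simp_all add: adjmap_colmap fammap_homogeneous[OF fammap_g] fammap_homogeneous[OF fammap_h]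
        g_h h_g colmap_smult3 colmap_adjmap smult3_smult3 power3_eq_cube power2_eq_square mult_ac)
  show "\<exists>x. nz x \<and> D^3 * l t (Am x) \<noteq> 0" for t
  proof (intro exI conjI)
    show "nz (Pm (0,0,1))" by (rule nz_Pm) (simp add: nz_def)
    show "D^3 * l t (Am (Pm (0,0,1))) \<noteq> 0"
      using det_nonzero by (simp add: adjmap_colmap fampoly_homogeneous[OF fampoly_l] l_e3)
  qed
qed simp

lemma transported_degeneration:
  assumes "standard_degeneration h g l m s q"
  shows "demazure_family (\<lambda>t x. Pm (h t (Am x)))
     \<and> (\<forall>t. t \<noteq> 0 \<longrightarrow> (\<exists>H. fiber_rep (\<lambda>t x. Pm (h t (Am x))) t H
                              \<and> quad_map_bp H a (map_second_pt Pm s) (Pm (q t))))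
     \<and> fiber_rep (\<lambda>t x. Pm (h t (Am x))) 0 (\<lambda>v. v)"
proof -
  interpret standard_degeneration h g l m s q by (rule assms)
  interpret birational_family 2 "\<lambda>t x. Pm (h t (Am x))" "\<lambda>t x. Pm (g t (Am x))"
      "\<lambda>t x. D^3 * l t (Am x)" "\<lambda>t x. D^3 * m t (Am x)"
    by (rule birational_family_transported[OF assms])
  have "quad_map_bp (\<lambda>x. Pm (h t (Am x))) a (map_second_pt Pm s) (Pm (q t))" if "t \<noteq> 0" for t
  proof -
    have ht: "hommap 2 (h t)" by (rule fammap_hommap[OF fammap_h])
    have "net (\<lambda>x. Pm (h t (Am x))) = conics a (map_second_pt Pm s) (Pm (q t))"
      by (rule net_transport[OF net_h[OF that]])
    moreover have "no_common_factor 2 (\<lambda>x. Pm (h t (Am x)))"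
      by (rule no_common_factor_transport[OF ht no_common_factor_h[OF that]])
    ultimately show ?thesis
      unfolding quad_map_bp_def using fammap_hommap[OF fammap_F] birational_fibre
      by (simp add: net_def conics_def)
  qed
  moreover have "fiber_rep (\<lambda>t x. Pm (h t (Am x))) 0 (\<lambda>v. v)"
    by (rule fiber_rep_identity) (auto simp: h_0 colmap_smult3 colmap_adjmap smult3_smult3)
  ultimately show ?thesis
    using demazure_family fiber_rep_self by blast
qed

lemma morph_A1_P2_line: "morph_A1_P2 (\<lambda>t. Pm (x0, 1, t))"
proof -
  have "Pm (x0,1,t) = (poly [:x0 * c0 a + c0 b, c0 c:] t, poly [:x0 * c1 a + c1 b, c1 c:] t,
      poly [:x0 * c2 a + c2 b, c2 c:] t) \<and> nz (Pm (x0,1,t))" for t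
    by (intro conjI pt_eqI nz_Pm) (simp_all add: algebra_simps nz_def)
  then show ?thesis unfolding morph_A1_P2_def by blast
qed

lemma exists_standard_degeneration:
  fixes p2 :: "'k second_pt"
  assumes "second_vec p2 = b"
  obtains h g l m s x0
  where "standard_degeneration h g l m s (\<lambda>t. (x0, 1, t))" "map_second_pt Pm s = p2"
proof (cases p2)
  case Proper
  then show thesis
    using that[OF standard_degeneration_proper_quad] assms
    by (simp add: map_second_pt_def colmap_basis second_vec_def)
next
  case Infnear
  then show thesis
    using that[OF standard_degeneration_infnear_quad] assms
    by (simp add: map_second_pt_def colmap_basis second_vec_def)
qed

end

lemma det3_nonzero_extension:
  assumes "\<not> par3 (p::'k::field pt) w"
  obtains u where "det3 p w u \<noteq> 0"
proof -
  have "\<not> (det3 p w (1,0,0) = 0 \<and> det3 p w (0,1,0) = 0 \<and> det3 p w (0,0,1) = 0)"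
    using assms by (auto simp: det3_def par3_def algebra_simps)
  then show thesis using that by blast
qed

theorem lemma4p1:
  fixes p1 :: "'k::field_char_0 pt" and p2 :: "'k second_pt"
  assumes "alg_closed TYPE('k)"
    and "nz p1"
    and "valid_second p1 p2"
  shows "\<exists>F p3. demazure_family F \<and> morph_A1_P2 p3
     \<and> (\<forall>t. t \<noteq> 0 \<longrightarrow> (\<exists>H. fiber_rep F t H \<and> quad_map_bp H p1 p2 (p3 t)))
     \<and> fiber_rep F 0 (\<lambda>v. v)
     \<and> det3 p1 (second_vec p2) (p3 0) = 0"
  \<comment> \<open>The construction is explicit.\<close>
proof -
  have "\<not> par3 p1 (second_vec p2)"
    using assms(3) by (cases p2) (auto simp: valid_second_def second_vec_def)
  then obtain u where "det3 p1 (second_vec p2) u \<noteq> 0" by (rule det3_nonzero_extension)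
  then interpret coords p1 "second_vec p2" u by unfold_locales
  obtain h g l m s x0 where deg: "standard_degeneration h g l m s (\<lambda>t. (x0, 1, t))"
    and "map_second_pt Pm s = p2"
    by (rule exists_standard_degeneration) (rule refl)
  moreover have "det3 p1 (second_vec p2) (Pm (x0, 1, 0)) = 0"
    by (simp add: det3_def algebra_simps)
  ultimately show ?thesis
    using transported_degeneration[OF deg] morph_A1_P2_line[of x0]
    by (intro exI[of _ "\<lambda>t x. Pm (h t (Am x))"] exI[of _ "\<lambda>t. Pm (x0, 1, t)"]) auto
qed

end
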